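(* If $\zeta$ is a holomorphic function on the unit disk $B_1\subset\mathbb{R}^2$ and $h\in W^{1,2}_0(B_1)$, then $$\int_{B_1}h^2|\zeta|^2\le8\left(\int_{B_1}|\nabla h|^2\right)\left(\int_{B_1}|\zeta|^2\right).$$ *)

theory Defs
  imports "HOL-Analysis.Analysis"
begin

text \<open>We identify \<open>\<real>\<^sup>2\<close> with the type \<open>complex\<close> (a Euclidean space of dimension 2).\<close>

definition test_fun_disk :: "(complex \<Rightarrow> real) \<Rightarrow> (complex \<Rightarrow> complex) \<Rightarrow> bool" where
  "test_fun_disk \<phi> D \<longleftrightarrow>
     (\<forall>x. (\<phi> has_derivative (\<lambda>v. D x \<bullet> v)) (at x)) \<and>
     continuous_on UNIV D \<and>
     compact (closure {x. \<phi> x \<noteq> 0}) \<and>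
     closure {x. \<phi> x \<noteq> 0} \<subseteq> ball 0 1"

text \<open>\<open>W12_0_disk h g\<close>: the function \<open>h\<close> belongs to \<open>W\<^sup>1\<^sup>,\<^sup>2\<^sub>0(B\<^sub>1)\<close> (the closure of
  compactly supported C^1 functions in the \<open>W\<^sup>1\<^sup>,\<^sup>2\<close> norm) and \<open>g\<close> is its weak
  gradient, i.e. the \<open>L\<^sup>2\<close>-limit of the gradients of the approximating functions.\<close>

definition W12_0_disk :: "(complex \<Rightarrow> real) \<Rightarrow> (complex \<Rightarrow> complex) \<Rightarrow> bool" where
  "W12_0_disk h g \<longleftrightarrow>
     h \<in> borel_measurable lebesgue \<and> g \<in> borel_measurable lebesgue \<and>
     (\<exists>\<phi> D. (\<forall>k. test_fun_disk (\<phi> k) (D k)) \<and>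
        (\<lambda>k. \<integral>\<^sup>+x\<in>ball 0 1. ennreal ((\<phi> k x - h x)\<^sup>2) \<partial>lebesgue) \<longlonglongrightarrow> 0 \<and>
        (\<lambda>k. \<integral>\<^sup>+x\<in>ball 0 1. ennreal ((norm (D k x - g x))\<^sup>2) \<partial>lebesgue) \<longlonglongrightarrow> 0)"

end

theory Submission
  imports Defs "HOL-Complex_Analysis.Complex_Analysis"
begin

text \<open>
  Two estimates are multiplied. The first is a pointwise Bergman bound
  |zeta(x)|^2 <= 8 (1 - |x|^2)^(-2) \<integral>|zeta|^2 for holomorphic zeta. It comes from the
  mean value property \<integral> rho(|z - x|^2) (zeta(z) - zeta(x)) dz = 0 for the radial weight
  rho(t) = 2 (s^2 - t)_+: this is the integral of the d-bar derivative of
  P(|z - x|^2) (zeta(z) - zeta(x)) / (z - x) with P' = rho, which vanishes by Fubini and the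
  fundamental theorem of calculus. Cauchy-Schwarz against rho then gives
  |zeta(x)|^2 s^4 <= 2 s^2 \<integral>|zeta|^2, and s tends to 1 - |x|.

  The second is the Hardy inequality \<integral> h^2 (1 - |z|^2)^(-2) <= \<integral> |grad h|^2. For a test
  function phi, the vector field V(z) = z / (1 - |z|^2) has divergence 2 (1 - |z|^2)^(-2) and
  |V|^2 <= (1 - |z|^2)^(-2), so integrating the divergence of phi^2 V and applying AM-GM to
  phi grad(phi).V proves it. It extends to W^{1,2}_0 by approximation.
\<close>

section \<open>Integrals of derivatives in the plane\<close>

lemma distr_pair_lborel_Complex:
  "distr (lborel \<Otimes>\<^sub>M lborel) borel (\<lambda>(x, y). Complex x y) = (lborel :: complex measure)"
proof (rule lborel_eqI[symmetric])
  fix l u :: complex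
  assume lu: "\<And>b. b \<in> Basis \<Longrightarrow> l \<bullet> b \<le> u \<bullet> b"
  have m: "(\<lambda>(x, y). Complex x y) \<in> measurable (lborel \<Otimes>\<^sub>M lborel) borel"
    unfolding Complex_eq case_prod_beta by measurable
  have "(\<lambda>(x, y). Complex x y) -` box l u \<inter> space (lborel \<Otimes>\<^sub>M lborel)
        = box (Re l) (Re u) \<times> box (Im l) (Im u)"
    by (auto simp: mem_box Basis_complex_def space_pair_measure)
  then show "emeasure (distr (lborel \<Otimes>\<^sub>M lborel) borel (\<lambda>(x, y). Complex x y)) (box l u)
        = (\<Prod>b\<in>Basis. (u - l) \<bullet> b)"
    using lu[of 1] lu[of \<i>]
    by (simp add: emeasure_distr[OF m] lborel.emeasure_pair_measure_Times Basis_complex_def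
         ennreal_mult[symmetric] inner_complex_def)
qed simp

lemma integral_lborel_complex_iterated:
  fixes f :: "complex \<Rightarrow> 'b::{banach,second_countable_topology}"
  assumes f: "integrable lborel f"
  shows "integral\<^sup>L lborel f = (\<integral>y. (\<integral>x. f (Complex x y) \<partial>lborel) \<partial>lborel)"
    and "integral\<^sup>L lborel f = (\<integral>x. (\<integral>y. f (Complex x y) \<partial>lborel) \<partial>lborel)"
proof -
  have m: "(\<lambda>(x, y). Complex x y) \<in> measurable (lborel \<Otimes>\<^sub>M lborel) borel"
    unfolding Complex_eq case_prod_beta by measurable
  have fm: "f \<in> borel_measurable borel"
    using f by (simp add: borel_measurable_integrable)
  have eq: "integral\<^sup>L lborel f = integral\<^sup>L (lborel \<Otimes>\<^sub>M lborel) (\<lambda>(x, y). f (Complex x y))"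
    using integral_distr[OF m fm] distr_pair_lborel_Complex by (simp add: split_beta')
  have i: "integrable (lborel \<Otimes>\<^sub>M lborel) (\<lambda>(x, y). f (Complex x y))"
    using f integrable_distr_eq[OF m fm] distr_pair_lborel_Complex by (simp add: split_beta')
  show "integral\<^sup>L lborel f = (\<integral>y. (\<integral>x. f (Complex x y) \<partial>lborel) \<partial>lborel)"
    using lborel_pair.integral_snd[of "\<lambda>x y. f (Complex x y)"] i eq by simp
  show "integral\<^sup>L lborel f = (\<integral>x. (\<integral>y. f (Complex x y) \<partial>lborel) \<partial>lborel)"
    using lborel_pair.integral_fst[of "\<lambda>x y. f (Complex x y)"] i eq by simp
qed

lemma has_derivative_zero_if_vanishing_near:
  assumes "(f has_derivative f') (at z)" "open S" "z \<in> S" "\<And>x. x \<in> S \<Longrightarrow> f x = 0"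
  shows "f' = (\<lambda>v. 0)"
proof -
  have "(f has_derivative (\<lambda>v. 0)) (at z)"
    by (rule has_derivative_transform_within_open[OF has_derivative_const assms(2,3)])
       (use assms(4) in auto)
  then show ?thesis
    using has_derivative_unique assms(1) by blast
qed

lemma has_derivative_vanishing_outside:
  assumes "closed K" "K \<subseteq> U" "open U" "\<And>z. z \<in> U \<Longrightarrow> (f has_derivative f' z) (at z)"
    and "\<And>z. z \<notin> K \<Longrightarrow> f z = 0" "\<And>z. z \<notin> K \<Longrightarrow> f' z = (\<lambda>v. 0)"
  shows "(f has_derivative f' z) (at z)"
proof (cases "z \<in> K")
  case True
  then show ?thesis using assms(2,4) by blast
next
  case False
  have "(f has_derivative (\<lambda>v. 0)) (at z)"
    by (rule has_derivative_transform_within_open[OF has_derivative_const, of "-K"])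
       (use assms(1,5) False in \<open>auto simp: open_Compl\<close>)
  then show ?thesis using assms(6)[OF False] by simp
qed

lemma continuous_on_vanishing_outside:
  assumes "closed K" "K \<subseteq> U" "open U" "continuous_on U f" "\<And>z. z \<notin> K \<Longrightarrow> f z = 0"
  shows "continuous_on UNIV f"
proof -
  have "continuous_on (-K) f"
    by (rule continuous_on_cong[THEN iffD1, OF refl _ continuous_on_const[of _ 0]])
       (use assms(5) in auto)
  then have "continuous_on (U \<union> -K) f"
    using continuous_on_open_Un assms(1,3,4) open_Compl by blast
  moreover have "U \<union> -K = UNIV" using assms(2) by auto
  ultimately show ?thesis by simp
qed

lemma integrable_continuous_compact_support:
  fixes f :: "'a::euclidean_space \<Rightarrow> 'b::{banach,second_countable_topology}"
  assumes "compact K" "K \<subseteq> U" "open U" "continuous_on U f" "\<And>z. z \<notin> K \<Longrightarrow> f z = 0"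
  shows "integrable lborel f"
proof -
  have "continuous_on UNIV f"
    using continuous_on_vanishing_outside compact_imp_closed assms by blast
  then have "integrable lborel (\<lambda>z. indicator K z *\<^sub>R f z)"
    by (rule borel_integrable_compact[OF assms(1) continuous_on_subset]) simp
  also have "(\<lambda>z. indicator K z *\<^sub>R f z) = f"
    using assms(5) by (auto simp: indicator_def fun_eq_iff)
  finally show ?thesis .
qed

lemma integral_derivative_compact_support_eq_0:
  fixes f :: "real \<Rightarrow> 'b::euclidean_space"
  assumes der: "\<And>t. (f has_vector_derivative f' t) (at t)" and cont: "continuous_on UNIV f'"
    and supp: "\<And>t. R \<le> \<bar>t\<bar> \<Longrightarrow> f t = 0"
  shows "integral\<^sup>L lborel f' = 0"
proof -
  define r where "r = \<bar>R\<bar>"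
  have f'_outside: "f' t = 0" if "r < \<bar>t\<bar>" for t
  proof -
    have "(f has_derivative (\<lambda>h. h *\<^sub>R f' t)) (at t)"
      using der by (simp add: has_vector_derivative_def)
    then have "(\<lambda>h. h *\<^sub>R f' t) = (\<lambda>h. 0)"
      by (rule has_derivative_zero_if_vanishing_near[where S="{t. r < \<bar>t\<bar>}"])
         (use that supp in \<open>auto simp: r_def intro!: open_Collect_less continuous_intros\<close>)
    then show ?thesis by (metis scaleR_one)
  qed
  have "integral\<^sup>L lborel f' = (\<integral>t. indicator {-r..r} t *\<^sub>R f' t \<partial>lborel)"
    by (rule Bochner_Integration.integral_cong) (auto simp: indicator_def f'_outside)
  also have "\<dots> = f r - f (-r)"
    by (rule integral_FTC_atLeastAtMost)
       (auto simp: r_def intro: has_vector_derivative_at_within der continuous_on_subset[OF cont])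
  also have "\<dots> = 0"
    using supp[of r] supp[of "-r"] by (simp add: r_def)
  finally show ?thesis .
qed

lemma has_vector_derivative_along_line:
  assumes "(F has_derivative F') (at (a + t *\<^sub>R v))"
  shows "((\<lambda>t. F (a + t *\<^sub>R v)) has_vector_derivative F' v) (at t)"
proof -
  have "((\<lambda>t. a + t *\<^sub>R v) has_derivative (\<lambda>h. h *\<^sub>R v)) (at t)"
    by (auto intro!: derivative_eq_intros)
  from diff_chain_at[OF this assms] show ?thesis
    using linear_scale[OF has_derivative_linear[OF assms]]
    by (simp add: has_vector_derivative_def o_def)
qed

lemma integral_partial_derivatives_eq_0:
  fixes F :: "complex \<Rightarrow> 'b::euclidean_space"
  assumes K: "compact K" "K \<subseteq> U" "open U"
    and der: "\<And>z. z \<in> U \<Longrightarrow> (F has_derivative F' z) (at z)"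
    and cont: "\<And>v. continuous_on U (\<lambda>z. F' z v)"
    and F_outside: "\<And>z. z \<notin> K \<Longrightarrow> F z = 0" and F'_outside: "\<And>z. z \<notin> K \<Longrightarrow> F' z = (\<lambda>v. 0)"
  shows "integrable lborel (\<lambda>z. F' z v)"
    and "integral\<^sup>L lborel (\<lambda>z. F' z 1) = 0" and "integral\<^sup>L lborel (\<lambda>z. F' z \<i>) = 0"
proof -
  have der_UNIV: "(F has_derivative F' z) (at z)" for z
    using has_derivative_vanishing_outside[OF compact_imp_closed[OF K(1)] K(2,3) der F_outside F'_outside] .
  have cont_UNIV: "continuous_on UNIV (\<lambda>z. F' z v)" for v
    using continuous_on_vanishing_outside[OF compact_imp_closed[OF K(1)] K(2,3) cont] F'_outside by simp
  show integrable: "integrable lborel (\<lambda>z. F' z v)" for v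
    using integrable_continuous_compact_support[OF K cont] F'_outside by simp
  obtain R where "K \<subseteq> ball 0 R"
    using bounded_subset_ballD[OF compact_imp_bounded[OF K(1)]] by blast
  then have supp: "F z = 0" if "R \<le> cmod z" for z
    using that F_outside by fastforce
  have line: "(\<integral>t. F' (a + t *\<^sub>R v) v \<partial>lborel) = 0"
    if "\<And>t. \<bar>t\<bar> \<le> cmod (a + t *\<^sub>R v)" for a v
  proof (rule integral_derivative_compact_support_eq_0)
    show "((\<lambda>t. F (a + t *\<^sub>R v)) has_vector_derivative F' (a + t *\<^sub>R v) v) (at t)" for t
      by (rule has_vector_derivative_along_line[OF der_UNIV])
    show "continuous_on UNIV (\<lambda>t. F' (a + t *\<^sub>R v) v)"
      by (rule continuous_on_compose2[OF cont_UNIV[of v]]) (auto intro!: continuous_intros)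
    show "F (a + t *\<^sub>R v) = 0" if "R \<le> \<bar>t\<bar>" for t
      using supp \<open>R \<le> \<bar>t\<bar>\<close> \<open>\<And>t. \<bar>t\<bar> \<le> cmod (a + t *\<^sub>R v)\<close> order_trans by blast
  qed
  have lines: "Complex 0 y + x *\<^sub>R 1 = Complex x y" "Complex x 0 + y *\<^sub>R \<i> = Complex x y" for x y
    by (simp_all add: complex_eq_iff)
  have "integral\<^sup>L lborel (\<lambda>z. F' z 1) = (\<integral>y. (\<integral>x. F' (Complex 0 y + x *\<^sub>R 1) 1 \<partial>lborel) \<partial>lborel)"
    using integral_lborel_complex_iterated(1)[OF integrable] by (simp only: lines)
  also have "\<dots> = 0"
    using line[of "Complex 0 y" 1 for y] abs_Re_le_cmod[of "Complex t y" for t y] by (simp add: lines)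
  finally show "integral\<^sup>L lborel (\<lambda>z. F' z 1) = 0" .
  have "integral\<^sup>L lborel (\<lambda>z. F' z \<i>) = (\<integral>x. (\<integral>y. F' (Complex x 0 + y *\<^sub>R \<i>) \<i> \<partial>lborel) \<partial>lborel)"
    using integral_lborel_complex_iterated(2)[OF integrable] by (simp only: lines)
  also have "\<dots> = 0"
    using line[of "Complex x 0" \<i> for x] abs_Im_le_cmod[of "Complex x t" for x t] by (simp add: lines)
  finally show "integral\<^sup>L lborel (\<lambda>z. F' z \<i>) = 0" .
qed

lemma ball_in_sets_lebesgue [measurable]: "ball x r \<in> sets lebesgue"
  by (rule sets_completionI_sets) simp

lemma has_derivative_norm_diff_power2:
  fixes x z :: "'a::real_inner"
  shows "((\<lambda>z. (norm (z - x))\<^sup>2) has_derivative (\<lambda>v. 2 * ((z - x) \<bullet> v))) (at z)"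
proof -
  have "((\<lambda>z. (z - x) \<bullet> (z - x)) has_derivative (\<lambda>v. (z - x) \<bullet> v + v \<bullet> (z - x))) (at z)"
    by (auto intro!: derivative_eq_intros)
  then show ?thesis by (simp add: inner_commute power2_norm_eq_inner)
qed

section \<open>The Hardy inequality on the disk\<close>

lemma test_fun_diskE:
  assumes "test_fun_disk \<phi> D"
  obtains K where "compact K" "K \<subseteq> ball 0 1" "\<And>z. z \<notin> K \<Longrightarrow> \<phi> z = 0"
    "\<And>z. z \<notin> K \<Longrightarrow> D z = 0" "\<And>z. (\<phi> has_derivative (\<lambda>v. D z \<bullet> v)) (at z)"
    "continuous_on UNIV D" "continuous_on UNIV \<phi>"
proof -
  define K where "K = closure {x. \<phi> x \<noteq> 0}"
  have K: "compact K" "K \<subseteq> ball 0 1" and der: "\<And>z. (\<phi> has_derivative (\<lambda>v. D z \<bullet> v)) (at z)"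
    and cont: "continuous_on UNIV D"
    using assms unfolding K_def test_fun_disk_def by auto
  have \<phi>_outside: "\<phi> z = 0" if "z \<notin> K" for z
    using that closure_subset[of "{x. \<phi> x \<noteq> 0}"] unfolding K_def by auto
  have D_outside: "D z = 0" if "z \<notin> K" for z
  proof -
    have "(\<lambda>v. D z \<bullet> v) = (\<lambda>v. 0)"
      by (rule has_derivative_zero_if_vanishing_near[OF der, where S="-K"])
         (use that \<phi>_outside K in \<open>auto simp: open_Compl compact_imp_closed\<close>)
    then have "D z \<bullet> D z = 0" by (rule fun_cong)
    then show ?thesis by simp
  qed
  have "continuous_on UNIV \<phi>"
    by (rule continuous_at_imp_continuous_on) (use der has_derivative_continuous in blast)
  with that K \<phi>_outside D_outside der cont show ?thesis
    by metis
qed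

definition hardy_weight :: "complex \<Rightarrow> real" where
  "hardy_weight z = 1 / (1 - (cmod z)\<^sup>2)\<^sup>2"

definition hardy_field :: "complex \<Rightarrow> complex" where
  "hardy_field z = z /\<^sub>R (1 - (cmod z)\<^sup>2)"

definition hardy_field_deriv :: "complex \<Rightarrow> complex \<Rightarrow> complex" where
  "hardy_field_deriv z v = v /\<^sub>R (1 - (cmod z)\<^sup>2) + (2 * hardy_weight z * (z \<bullet> v)) *\<^sub>R z"

lemma hardy_weight_nonneg: "0 \<le> hardy_weight z"
  by (simp add: hardy_weight_def)

lemma measurable_hardy_weight [measurable]: "hardy_weight \<in> borel_measurable lebesgue"
  unfolding hardy_weight_def[abs_def] by (intro measurable_completion) measurable

lemma one_minus_norm_power2_pos: "cmod z < 1 \<Longrightarrow> 0 < 1 - (cmod z)\<^sup>2"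
  by (simp add: power_less_one_iff abs_less_iff)

lemma has_derivative_hardy_field:
  assumes "cmod z < 1"
  shows "(hardy_field has_derivative hardy_field_deriv z) (at z)"
proof -
  define q where "q = 1 - (cmod z)\<^sup>2"
  have q: "q \<noteq> 0" using one_minus_norm_power2_pos[OF assms] by (simp add: q_def)
  have "((\<lambda>z. 1 - (cmod z)\<^sup>2) has_derivative (\<lambda>v. - (2 * (z \<bullet> v)))) (at z)"
    using has_derivative_diff[OF has_derivative_const has_derivative_norm_diff_power2[of 0]] by simp
  then have "((\<lambda>z. inverse (1 - (cmod z)\<^sup>2)) has_derivative (\<lambda>v. - (inverse q * - (2 * (z \<bullet> v)) * inverse q))) (at z)"
    using q unfolding q_def by (rule Deriv.has_derivative_inverse[rotated])
  from has_derivative_scaleR[OF this has_derivative_ident]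
  have "(hardy_field has_derivative
      (\<lambda>v. v /\<^sub>R q + (- (inverse q * - (2 * (z \<bullet> v)) * inverse q)) *\<^sub>R z)) (at z)"
    by (simp add: hardy_field_def[abs_def] q_def)
  also have "(\<lambda>v. v /\<^sub>R q + (- (inverse q * - (2 * (z \<bullet> v)) * inverse q)) *\<^sub>R z) = hardy_field_deriv z"
    by (simp add: fun_eq_iff hardy_field_deriv_def hardy_weight_def q_def power2_eq_square
        divide_inverse mult_ac)
  finally show ?thesis .
qed

lemma continuous_on_hardy_weight: "continuous_on (ball 0 1) hardy_weight"
  unfolding hardy_weight_def[abs_def]
  by (intro continuous_intros) (use one_minus_norm_power2_pos in force)

lemma continuous_on_hardy_field: "continuous_on (ball 0 1) hardy_field"
  unfolding hardy_field_def[abs_def]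
  by (intro continuous_intros) (use one_minus_norm_power2_pos in force)

lemma continuous_on_hardy_field_deriv: "continuous_on (ball 0 1) (\<lambda>z. hardy_field_deriv z v)"
  unfolding hardy_field_deriv_def
  by (intro continuous_intros continuous_on_hardy_weight) (use one_minus_norm_power2_pos in force)

lemma hardy_field_divergence:
  assumes "cmod z < 1"
  shows "Re (hardy_field_deriv z 1) + Im (hardy_field_deriv z \<i>) = 2 * hardy_weight z"
proof -
  have q: "0 < 1 - (cmod z)\<^sup>2" by (rule one_minus_norm_power2_pos[OF assms])
  have "Re (hardy_field_deriv z 1) + Im (hardy_field_deriv z \<i>)
      = 2 / (1 - (cmod z)\<^sup>2) + 2 * hardy_weight z * ((Re z)\<^sup>2 + (Im z)\<^sup>2)"
    by (simp add: hardy_field_deriv_def inner_complex_def divide_inverse power2_eq_square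
        algebra_simps)
  also have "(Re z)\<^sup>2 + (Im z)\<^sup>2 = (cmod z)\<^sup>2"
    by (simp add: cmod_power2)
  also have "2 / (1 - (cmod z)\<^sup>2) + 2 * hardy_weight z * (cmod z)\<^sup>2 = 2 * hardy_weight z"
  proof -
    define p where "p = 1 - (cmod z)\<^sup>2"
    have "(cmod z)\<^sup>2 = 1 - p" by (simp add: p_def)
    with q show ?thesis
      unfolding hardy_weight_def p_def[symmetric] by (simp add: field_simps power2_eq_square)
  qed
  finally show ?thesis .
qed

lemma norm_hardy_field_le:
  assumes "cmod z < 1"
  shows "(cmod (hardy_field z))\<^sup>2 \<le> hardy_weight z"
proof -
  have q: "0 < 1 - (cmod z)\<^sup>2" by (rule one_minus_norm_power2_pos[OF assms])
  have "(cmod (hardy_field z))\<^sup>2 = (cmod z)\<^sup>2 / (1 - (cmod z)\<^sup>2)\<^sup>2"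
    using q by (simp add: hardy_field_def power_mult_distrib power_inverse divide_inverse_commute)
  also have "\<dots> \<le> hardy_weight z"
    using assms unfolding hardy_weight_def by (intro divide_right_mono) (auto simp: power_le_one)
  finally show ?thesis .
qed

lemma integrable_test_fun:
  fixes f :: "complex \<Rightarrow> 'a::{banach,second_countable_topology}"
  assumes "test_fun_disk \<phi> D" "continuous_on (ball 0 1) f" "\<And>z. \<phi> z = 0 \<Longrightarrow> D z = 0 \<Longrightarrow> f z = 0"
  shows "integrable lborel f"
proof -
  obtain K where "compact K" "K \<subseteq> ball 0 1" "\<And>z. z \<notin> K \<Longrightarrow> \<phi> z = 0" "\<And>z. z \<notin> K \<Longrightarrow> D z = 0"
    using test_fun_diskE[OF assms(1)] by metis
  then show ?thesis
    using integrable_continuous_compact_support[OF _ _ open_ball assms(2)] assms(3) by metis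
qed

lemma test_fun_disk_measurable:
  assumes "test_fun_disk \<phi> D"
  shows "\<phi> \<in> borel_measurable lebesgue" and "D \<in> borel_measurable lebesgue"
proof -
  have "continuous_on UNIV \<phi>" "continuous_on UNIV D"
    by (rule test_fun_diskE[OF assms]; assumption)+
  then show "\<phi> \<in> borel_measurable lebesgue" "D \<in> borel_measurable lebesgue"
    by (intro measurable_completion borel_measurable_continuous_onI; simp)+
qed

lemma abs_mult_inner_le:
  fixes d v :: "'a::real_inner"
  assumes "(norm v)\<^sup>2 \<le> w"
  shows "\<bar>f * (d \<bullet> v)\<bar> \<le> (f\<^sup>2 * w + (norm d)\<^sup>2) / 2"
proof -
  have "\<bar>f * (d \<bullet> v)\<bar> \<le> (\<bar>f\<bar> * norm v) * norm d"
    using Cauchy_Schwarz_ineq2[of d v] by (simp add: abs_mult mult_left_mono mult_ac)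
  also have "\<dots> \<le> ((\<bar>f\<bar> * norm v)\<^sup>2 + (norm d)\<^sup>2) / 2"
    using sum_squares_bound[of "\<bar>f\<bar> * norm v" "norm d"] by simp
  also have "(\<bar>f\<bar> * norm v)\<^sup>2 \<le> f\<^sup>2 * w"
    using assms by (simp add: power_mult_distrib mult_left_mono)
  finally show ?thesis by simp
qed

lemma hardy_identity_test_fun:
  assumes "test_fun_disk \<phi> D"
  shows "integral\<^sup>L lborel (\<lambda>z. (\<phi> z)\<^sup>2 * hardy_weight z)
       = - integral\<^sup>L lborel (\<lambda>z. \<phi> z * (D z \<bullet> hardy_field z))"
proof -
  obtain K where K: "compact K" "K \<subseteq> ball 0 1" and \<phi>_outside: "\<And>z. z \<notin> K \<Longrightarrow> \<phi> z = 0"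
    and D_outside: "\<And>z. z \<notin> K \<Longrightarrow> D z = 0" and der: "\<And>z. (\<phi> has_derivative (\<lambda>v. D z \<bullet> v)) (at z)"
    and cont_D: "continuous_on UNIV D" and cont_\<phi>: "continuous_on UNIV \<phi>"
    using test_fun_diskE[OF assms] by metis
  define F where "F z = (\<phi> z)\<^sup>2 *\<^sub>R hardy_field z" for z
  define F' where "F' z v = (\<phi> z)\<^sup>2 *\<^sub>R hardy_field_deriv z v + (2 * \<phi> z * (D z \<bullet> v)) *\<^sub>R hardy_field z"
    for z v
  have der_F: "(F has_derivative F' z) (at z)" if "z \<in> ball 0 1" for z
  proof -
    have "(hardy_field has_derivative hardy_field_deriv z) (at z)"
      using that by (simp add: has_derivative_hardy_field)
    from has_derivative_scaleR[OF has_derivative_power[OF der[of z], where n=2] this] show ?thesis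
      by (simp add: F_def[abs_def] F'_def[abs_def] algebra_simps)
  qed
  have cont_F': "continuous_on (ball 0 1) (\<lambda>z. F' z v)" for v
    unfolding F'_def
    by (intro continuous_intros continuous_on_hardy_field continuous_on_hardy_field_deriv
        continuous_on_subset[OF cont_\<phi>] continuous_on_subset[OF cont_D]) auto
  have "F z = 0" "F' z = (\<lambda>v. 0)" if "z \<notin> K" for z
    using that by (simp_all add: F_def F'_def \<phi>_outside D_outside fun_eq_iff)
  note divergence_free = integral_partial_derivatives_eq_0[OF K open_ball der_F cont_F' this]
  have "0 = integral\<^sup>L lborel (\<lambda>z. Re (F' z 1) + Im (F' z \<i>))"
    using divergence_free by simp
  also have "\<dots> = integral\<^sup>L lborel (\<lambda>z. 2 * ((\<phi> z)\<^sup>2 * hardy_weight z) + 2 * (\<phi> z * (D z \<bullet> hardy_field z)))"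
  proof (rule Bochner_Integration.integral_cong[OF refl])
    fix z
    show "Re (F' z 1) + Im (F' z \<i>) = 2 * ((\<phi> z)\<^sup>2 * hardy_weight z) + 2 * (\<phi> z * (D z \<bullet> hardy_field z))"
    proof (cases "z \<in> K")
      case True
      then have "cmod z < 1" using K(2) by auto
      have "Re (F' z 1) + Im (F' z \<i>) = (\<phi> z)\<^sup>2 * (Re (hardy_field_deriv z 1)
          + Im (hardy_field_deriv z \<i>)) + 2 * (\<phi> z * (D z \<bullet> hardy_field z))"
        by (simp add: F'_def inner_complex_def algebra_simps)
      with hardy_field_divergence[OF \<open>cmod z < 1\<close>] show ?thesis
        by simp
    qed (simp add: F'_def \<phi>_outside)
  qed
  also have "\<dots> = 2 * integral\<^sup>L lborel (\<lambda>z. (\<phi> z)\<^sup>2 * hardy_weight z)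
      + 2 * integral\<^sup>L lborel (\<lambda>z. \<phi> z * (D z \<bullet> hardy_field z))"
    using integrable_test_fun[OF assms, of "\<lambda>z. (\<phi> z)\<^sup>2 * hardy_weight z"]
      integrable_test_fun[OF assms, of "\<lambda>z. \<phi> z * (D z \<bullet> hardy_field z)"]
    by (simp add: continuous_intros continuous_on_hardy_weight continuous_on_hardy_field
        continuous_on_subset[OF cont_\<phi>] continuous_on_subset[OF cont_D])
  finally show ?thesis by simp
qed

lemma hardy_inequality_test_fun:
  assumes "test_fun_disk \<phi> D"
  shows "integral\<^sup>L lborel (\<lambda>z. (\<phi> z)\<^sup>2 * hardy_weight z) \<le> integral\<^sup>L lborel (\<lambda>z. (cmod (D z))\<^sup>2)"
proof -
  obtain K where K: "K \<subseteq> ball 0 1" and \<phi>_outside: "\<And>z. z \<notin> K \<Longrightarrow> \<phi> z = 0"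
    and D_outside: "\<And>z. z \<notin> K \<Longrightarrow> D z = 0" and cont_D: "continuous_on UNIV D"
    and cont_\<phi>: "continuous_on UNIV \<phi>"
    using test_fun_diskE[OF assms] by metis
  have int: "integrable lborel (\<lambda>z. (\<phi> z)\<^sup>2 * hardy_weight z)"
    "integrable lborel (\<lambda>z. \<phi> z * (D z \<bullet> hardy_field z))"
    "integrable lborel (\<lambda>z. (cmod (D z))\<^sup>2)"
    by (intro integrable_test_fun[OF assms];
        auto intro!: continuous_intros continuous_on_hardy_weight continuous_on_hardy_field
          continuous_on_subset[OF cont_\<phi>] continuous_on_subset[OF cont_D])+
  have "integral\<^sup>L lborel (\<lambda>z. (\<phi> z)\<^sup>2 * hardy_weight z)
      = integral\<^sup>L lborel (\<lambda>z. - (\<phi> z * (D z \<bullet> hardy_field z)))"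
    using hardy_identity_test_fun[OF assms] by simp
  also have "\<dots> \<le> integral\<^sup>L lborel (\<lambda>z. ((\<phi> z)\<^sup>2 * hardy_weight z + (cmod (D z))\<^sup>2) / 2)"
  proof (rule integral_mono)
    fix z
    show "- (\<phi> z * (D z \<bullet> hardy_field z)) \<le> ((\<phi> z)\<^sup>2 * hardy_weight z + (cmod (D z))\<^sup>2) / 2"
    proof (cases "z \<in> K")
      case True
      then have "cmod z < 1" using K by auto
      from abs_mult_inner_le[OF norm_hardy_field_le[OF this], of "\<phi> z" "D z"] show ?thesis
        by linarith
    qed (simp add: \<phi>_outside D_outside)
  qed (use int in auto)
  also have "\<dots> = (integral\<^sup>L lborel (\<lambda>z. (\<phi> z)\<^sup>2 * hardy_weight z)
      + integral\<^sup>L lborel (\<lambda>z. (cmod (D z))\<^sup>2)) / 2"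
    using int by simp
  finally show ?thesis by simp
qed

lemma nn_integral_hardy_inequality_test_fun:
  assumes "test_fun_disk \<phi> D"
  shows "(\<integral>\<^sup>+z\<in>ball 0 1. ennreal ((\<phi> z)\<^sup>2 * hardy_weight z) \<partial>lebesgue)
       \<le> (\<integral>\<^sup>+z\<in>ball 0 1. ennreal ((cmod (D z))\<^sup>2) \<partial>lebesgue)"
proof -
  obtain K where K: "K \<subseteq> ball 0 1" "\<And>z. z \<notin> K \<Longrightarrow> \<phi> z = 0" "\<And>z. z \<notin> K \<Longrightarrow> D z = 0"
    and cont_D: "continuous_on UNIV D" and cont_\<phi>: "continuous_on UNIV \<phi>"
    using test_fun_diskE[OF assms] by metis
  have outside: "\<phi> z = 0" "D z = 0" if "z \<notin> ball 0 1" for z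
    using that K by blast+
  have restrict: "(\<integral>\<^sup>+z\<in>ball 0 1. ennreal (f z) \<partial>lebesgue) = ennreal (integral\<^sup>L lborel f)"
    if "continuous_on (ball 0 1) f" "\<And>z. \<phi> z = 0 \<Longrightarrow> D z = 0 \<Longrightarrow> f z = 0" "\<And>z. 0 \<le> f z"
    for f
  proof -
    have "(\<integral>\<^sup>+z\<in>ball 0 1. ennreal (f z) \<partial>lebesgue) = (\<integral>\<^sup>+z. ennreal (f z) \<partial>lborel)"
      unfolding nn_integral_completion
      by (rule nn_integral_cong) (use outside that(2) in \<open>auto simp: indicator_def\<close>)
    also have "\<dots> = ennreal (integral\<^sup>L lborel f)"
      by (rule nn_integral_eq_integral[OF integrable_test_fun[OF assms that(1)]])
         (auto intro!: AE_I2 that)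
    finally show ?thesis .
  qed
  have "(\<integral>\<^sup>+z\<in>ball 0 1. ennreal ((\<phi> z)\<^sup>2 * hardy_weight z) \<partial>lebesgue)
      = ennreal (integral\<^sup>L lborel (\<lambda>z. (\<phi> z)\<^sup>2 * hardy_weight z))"
    by (rule restrict) (auto intro!: continuous_intros continuous_on_hardy_weight
        continuous_on_subset[OF cont_\<phi>] simp: hardy_weight_nonneg)
  also have "\<dots> \<le> ennreal (integral\<^sup>L lborel (\<lambda>z. (cmod (D z))\<^sup>2))"
    by (intro ennreal_leI hardy_inequality_test_fun[OF assms])
  also have "\<dots> = (\<integral>\<^sup>+z\<in>ball 0 1. ennreal ((cmod (D z))\<^sup>2) \<partial>lebesgue)"
    by (rule restrict[symmetric]) (auto intro!: continuous_intros continuous_on_subset[OF cont_D])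
  finally show ?thesis .
qed

section \<open>A pointwise bound for holomorphic functions\<close>

definition bump :: "real \<Rightarrow> real \<Rightarrow> real" where
  "bump c t = 2 * max (c - t) 0"

definition bump_primitive :: "real \<Rightarrow> real \<Rightarrow> real" where
  "bump_primitive c t = - (max (c - t) 0)\<^sup>2"

lemma bump_nonneg: "0 \<le> bump c t"
  and bump_le: "0 \<le> c \<Longrightarrow> 0 \<le> t \<Longrightarrow> bump c t \<le> 2 * c"
  and bump_eq_0: "c \<le> t \<Longrightarrow> bump c t = 0"
  and bump_primitive_eq_0: "c \<le> t \<Longrightarrow> bump_primitive c t = 0"
  by (auto simp: bump_def bump_primitive_def)

lemma continuous_on_bump: "continuous_on A (bump c)"
  and continuous_on_bump_primitive: "continuous_on A (bump_primitive c)"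
  unfolding bump_def[abs_def] bump_primitive_def[abs_def] by (intro continuous_intros)+

lemma has_real_derivative_bump_primitive: "(bump_primitive c has_real_derivative bump c t) (at t)"
proof -
  consider "t < c" | "c < t" | "t = c" by linarith
  then show ?thesis
  proof cases
    case 1
    have "((\<lambda>t. - (c - t)\<^sup>2) has_real_derivative bump c t) (at t)"
      using 1 by (auto intro!: derivative_eq_intros simp: bump_def)
    then show ?thesis
      by (rule has_field_derivative_transform_within_open[where S="{..<c}"])
         (use 1 in \<open>auto simp: bump_primitive_def\<close>)
  next
    case 2
    have "((\<lambda>t. 0) has_real_derivative bump c t) (at t)"
      using 2 by (simp add: bump_def)
    then show ?thesis
      by (rule has_field_derivative_transform_within_open[where S="{c<..}"])
         (use 2 in \<open>auto simp: bump_primitive_def\<close>)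
  next
    case 3
    have "((\<lambda>h. (bump_primitive c (c + h) - bump_primitive c c) / h) \<longlongrightarrow> 0) (at 0)"
    proof (rule tendsto_0_le[of "\<lambda>h. h" _ _ 1])
      show "((\<lambda>h::real. h) \<longlongrightarrow> 0) (at 0)"
        by (rule tendsto_ident_at)
      show "\<forall>\<^sub>F h in at 0. norm ((bump_primitive c (c + h) - bump_primitive c c) / h) \<le> norm h * 1"
        by (rule always_eventually) (auto simp: bump_primitive_def max_def power2_eq_square abs_mult)
    qed
    then show ?thesis
      using 3 by (simp add: DERIV_def bump_def)
  qed
qed

lemma bump_norm_outside_cball:
  assumes "0 \<le> s" "z \<notin> cball x s"
  shows "bump (s\<^sup>2) ((norm (z - x))\<^sup>2) = 0" and "bump_primitive (s\<^sup>2) ((norm (z - x))\<^sup>2) = 0"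
  using assms by (intro bump_eq_0 bump_primitive_eq_0 power_mono; force simp: dist_norm norm_minus_commute)+

lemma continuous_on_bump_norm: "continuous_on A (\<lambda>z. bump c ((norm (z - x))\<^sup>2))"
  and continuous_on_bump_primitive_norm: "continuous_on A (\<lambda>z. bump_primitive c ((norm (z - x))\<^sup>2))"
  by (rule continuous_on_compose2[OF continuous_on_bump[of UNIV c]]
      continuous_on_compose2[OF continuous_on_bump_primitive[of UNIV c]];
      auto intro!: continuous_intros)+

text \<open>The quotient k = (zeta z - zeta x) / (z - x) is holomorphic, so in the d-bar combination
  F' z 1 + i F' z i of F = P k only the derivative of the weight P(|z - x|^2) survives.\<close>

lemma holomorphic_bump_mean_value:
  fixes \<zeta> :: "complex \<Rightarrow> complex"
  assumes hol: "\<zeta> holomorphic_on U" and U: "open U" and s: "0 < s" "cball x s \<subseteq> U"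
  shows "integral\<^sup>L lborel (\<lambda>z. bump (s\<^sup>2) ((cmod (z - x))\<^sup>2) *\<^sub>R (\<zeta> z - \<zeta> x)) = 0"
proof -
  define k where "k = (\<lambda>z. if z = x then deriv \<zeta> x else (\<zeta> z - \<zeta> x) / (z - x))"
  have hol_k: "k holomorphic_on U"
    unfolding k_def by (rule pole_lemma_open[OF hol U])
  define \<rho> where "\<rho> z = bump (s\<^sup>2) ((cmod (z - x))\<^sup>2)" for z
  define P where "P z = bump_primitive (s\<^sup>2) ((cmod (z - x))\<^sup>2)" for z
  define F' where "F' z v = P z *\<^sub>R (deriv k z * v) + (\<rho> z * (2 * ((z - x) \<bullet> v))) *\<^sub>R k z" for z v
  have der_F: "((\<lambda>z. P z *\<^sub>R k z) has_derivative F' z) (at z)" if "z \<in> U" for z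
  proof -
    have "(k has_derivative (\<lambda>v. deriv k z * v)) (at z)"
      using holomorphic_derivI[OF hol_k U that] by (simp add: has_field_derivative_def)
    moreover have "(P has_derivative (\<lambda>v. \<rho> z * (2 * ((z - x) \<bullet> v)))) (at z)"
      using diff_chain_at[OF has_derivative_norm_diff_power2 has_real_derivative_bump_primitive[
          unfolded has_field_derivative_def]]
      by (simp add: P_def[abs_def] \<rho>_def o_def)
    ultimately show ?thesis
      unfolding F'_def[abs_def] using has_derivative_scaleR by (fastforce simp: algebra_simps)
  qed
  have cont_F': "continuous_on U (\<lambda>z. F' z v)" for v
    unfolding F'_def \<rho>_def P_def
    by (intro continuous_intros holomorphic_on_imp_continuous_on[OF hol_k]
        holomorphic_on_imp_continuous_on[OF holomorphic_deriv[OF hol_k U]]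
        continuous_on_bump_norm continuous_on_bump_primitive_norm)
  have "P z *\<^sub>R k z = 0" "F' z = (\<lambda>v. 0)" if "z \<notin> cball x s" for z
    using that s(1) by (simp_all add: F'_def \<rho>_def P_def bump_norm_outside_cball fun_eq_iff)
  note divergence_free = integral_partial_derivatives_eq_0[OF compact_cball s(2) U der_F cont_F' this]
  have dbar: "F' z 1 + \<i> * F' z \<i> = 2 *\<^sub>R (\<rho> z *\<^sub>R (\<zeta> z - \<zeta> x))" for z
  proof -
    have "F' z 1 + \<i> * F' z \<i> = (\<rho> z * 2) *\<^sub>R (((z - x) \<bullet> 1 + \<i> * ((z - x) \<bullet> \<i>)) * k z)"
      by (simp add: F'_def algebra_simps scaleR_conv_of_real)
    also have "(z - x) \<bullet> 1 + \<i> * ((z - x) \<bullet> \<i>) = z - x"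
      by (simp add: inner_complex_def complex_eq_iff)
    also have "(z - x) * k z = \<zeta> z - \<zeta> x"
      by (simp add: k_def)
    finally show ?thesis by simp
  qed
  have "integral\<^sup>L lborel (\<lambda>z. F' z 1 + \<i> * F' z \<i>) = 0"
    using divergence_free by simp
  then have "integral\<^sup>L lborel (\<lambda>z. 2 *\<^sub>R (\<rho> z *\<^sub>R (\<zeta> z - \<zeta> x))) = 0"
    by (simp only: dbar)
  then show ?thesis
    unfolding integral_scaleR_right by (simp add: \<rho>_def)
qed

lemma weighted_mean_norm_sq_le:
  fixes \<rho> :: "'a \<Rightarrow> real" and f :: "'a \<Rightarrow> complex"
  assumes nonneg: "\<And>z. 0 \<le> \<rho> z" and int: "integrable M \<rho>" "integrable M (\<lambda>z. \<rho> z *\<^sub>R f z)"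
    "integrable M (\<lambda>z. \<rho> z * (cmod (f z))\<^sup>2)"
    and mean: "integral\<^sup>L M (\<lambda>z. \<rho> z *\<^sub>R f z) = integral\<^sup>L M \<rho> *\<^sub>R c"
  shows "integral\<^sup>L M \<rho> * (cmod c)\<^sup>2 \<le> integral\<^sup>L M (\<lambda>z. \<rho> z * (cmod (f z))\<^sup>2)"
proof -
  have int_Re: "integrable M (\<lambda>z. \<rho> z * Re (cnj c * f z))"
    using integrable_Re[OF integrable_mult_right[OF int(2), of "cnj c"]] by (simp add: mult_ac)
  have "(cmod c)\<^sup>2 = (Re c)\<^sup>2 + (Im c)\<^sup>2"
    by (rule cmod_power2)
  then have "integral\<^sup>L M \<rho> * (cmod c)\<^sup>2 = Re (cnj c * integral\<^sup>L M (\<lambda>z. \<rho> z *\<^sub>R f z))"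
    unfolding mean by (simp add: power2_eq_square algebra_simps)
  also have "cnj c * integral\<^sup>L M (\<lambda>z. \<rho> z *\<^sub>R f z) = integral\<^sup>L M (\<lambda>z. cnj c * (\<rho> z *\<^sub>R f z))"
    by (rule integral_mult_right_zero[symmetric])
  also have "Re \<dots> = integral\<^sup>L M (\<lambda>z. Re (cnj c * (\<rho> z *\<^sub>R f z)))"
    by (rule integral_Re[symmetric]) (rule integrable_mult_right[OF int(2)])
  also have "\<dots> = integral\<^sup>L M (\<lambda>z. \<rho> z * Re (cnj c * f z))"
    by (simp add: mult_ac)
  also have "\<dots> \<le> integral\<^sup>L M (\<lambda>z. \<rho> z * (((cmod c)\<^sup>2 + (cmod (f z))\<^sup>2) / 2))"
  proof (rule integral_mono[OF int_Re])
    show "integrable M (\<lambda>z. \<rho> z * (((cmod c)\<^sup>2 + (cmod (f z))\<^sup>2) / 2))"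
      using int by (simp add: distrib_left add_divide_distrib)
    fix z
    have "Re (cnj c * f z) \<le> cmod c * cmod (f z)"
      using complex_Re_le_cmod[of "cnj c * f z"] by (simp add: norm_mult)
    also have "\<dots> \<le> ((cmod c)\<^sup>2 + (cmod (f z))\<^sup>2) / 2"
      using sum_squares_bound[of "cmod c" "cmod (f z)"] by simp
    finally show "\<rho> z * Re (cnj c * f z) \<le> \<rho> z * (((cmod c)\<^sup>2 + (cmod (f z))\<^sup>2) / 2)"
      by (rule mult_left_mono) (rule nonneg)
  qed
  also have "\<dots> = (integral\<^sup>L M \<rho> * (cmod c)\<^sup>2 + integral\<^sup>L M (\<lambda>z. \<rho> z * (cmod (f z))\<^sup>2)) / 2"
    using int by (simp add: distrib_left add_divide_distrib)
  finally show ?thesis by simp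
qed

lemma integral_bump_ge:
  assumes "0 < s"
  shows "s ^ 4 \<le> integral\<^sup>L lborel (\<lambda>z. bump (s\<^sup>2) ((cmod (z - x))\<^sup>2))"
proof -
  \<comment> \<open>On the square of side s centred at x the weight is at least s^2.\<close>
  define B where "B = cbox (x - Complex (s/2) (s/2)) (x + Complex (s/2) (s/2))"
  have "s ^ 4 = integral\<^sup>L lborel (\<lambda>z. s\<^sup>2 * indicator B z)"
    unfolding B_def using assms
    by (simp add: measure_def emeasure_lborel_cbox_eq Basis_complex_def inner_complex_def
        power2_eq_square power4_eq_xxxx)
  also have "\<dots> \<le> integral\<^sup>L lborel (\<lambda>z. bump (s\<^sup>2) ((cmod (z - x))\<^sup>2))"
  proof (rule integral_mono)
    show "integrable lborel (\<lambda>z. s\<^sup>2 * indicator B z)"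
      unfolding B_def by (simp add: emeasure_lborel_cbox_eq)
    show "integrable lborel (\<lambda>z. bump (s\<^sup>2) ((cmod (z - x))\<^sup>2))"
      using assms
      by (intro integrable_continuous_compact_support[OF compact_cball _ open_UNIV, of x s])
         (auto intro!: continuous_on_bump_norm bump_norm_outside_cball)
    fix z
    show "s\<^sup>2 * indicator B z \<le> bump (s\<^sup>2) ((cmod (z - x))\<^sup>2)"
    proof (cases "z \<in> B")
      case True
      then have "\<bar>Re (z - x)\<bar> \<le> s / 2" "\<bar>Im (z - x)\<bar> \<le> s / 2"
        unfolding B_def by (auto simp: mem_box Basis_complex_def inner_complex_def abs_if split: if_splits)
      then have "(Re (z - x))\<^sup>2 + (Im (z - x))\<^sup>2 \<le> (s / 2)\<^sup>2 + (s / 2)\<^sup>2"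
        by (intro add_mono; simp add: abs_le_square_iff[symmetric])
      then have "(cmod (z - x))\<^sup>2 \<le> s\<^sup>2 / 2"
        by (simp add: cmod_power2 power_divide)
      moreover have "0 < s\<^sup>2"
        using assms by simp
      ultimately have "0 \<le> s\<^sup>2 - (cmod (z - x))\<^sup>2"
        by linarith
      then have "bump (s\<^sup>2) ((cmod (z - x))\<^sup>2) = 2 * (s\<^sup>2 - (cmod (z - x))\<^sup>2)"
        by (simp add: bump_def max_absorb1)
      with \<open>(cmod (z - x))\<^sup>2 \<le> s\<^sup>2 / 2\<close> True show ?thesis
        by simp
    qed (simp add: bump_nonneg)
  qed
  finally show ?thesis .
qed

lemma holomorphic_norm_sq_le_bump_integral:
  fixes \<zeta> :: "complex \<Rightarrow> complex"
  assumes hol: "\<zeta> holomorphic_on U" and U: "open U" and s: "0 < s" "cball x s \<subseteq> U"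
  shows "(cmod (\<zeta> x))\<^sup>2 * s ^ 4 \<le> integral\<^sup>L lborel (\<lambda>z. bump (s\<^sup>2) ((cmod (z - x))\<^sup>2) * (cmod (\<zeta> z))\<^sup>2)"
proof -
  define \<rho> where "\<rho> z = bump (s\<^sup>2) ((cmod (z - x))\<^sup>2)" for z
  have int: "integrable lborel (\<lambda>z. \<rho> z *\<^sub>R f z)" if "continuous_on U f" for f :: "complex \<Rightarrow> 'a::{banach,second_countable_topology}"
    by (rule integrable_continuous_compact_support[OF compact_cball s(2) U])
       (use s(1) that in \<open>auto intro!: continuous_intros continuous_on_bump_norm
         simp: \<rho>_def bump_norm_outside_cball\<close>)
  have cont_\<zeta>: "continuous_on U \<zeta>"
    by (rule holomorphic_on_imp_continuous_on[OF hol])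
  have int_\<rho>: "integrable lborel \<rho>"
    using int[of "\<lambda>_. 1::real"] by simp
  have int_\<rho>\<zeta>: "integrable lborel (\<lambda>z. \<rho> z *\<^sub>R \<zeta> z)"
    by (rule int[OF cont_\<zeta>])
  have int_\<rho>\<zeta>2: "integrable lborel (\<lambda>z. \<rho> z * (cmod (\<zeta> z))\<^sup>2)"
    using int[of "\<lambda>z. (cmod (\<zeta> z))\<^sup>2"] by (simp add: continuous_on_power continuous_on_norm cont_\<zeta>)
  have "integral\<^sup>L lborel (\<lambda>z. \<rho> z *\<^sub>R \<zeta> z) - integral\<^sup>L lborel (\<lambda>z. \<rho> z *\<^sub>R \<zeta> x)
      = integral\<^sup>L lborel (\<lambda>z. \<rho> z *\<^sub>R (\<zeta> z - \<zeta> x))"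
    using int_\<rho>\<zeta> int_\<rho> by (simp add: scaleR_diff_right)
  also have "\<dots> = 0"
    unfolding \<rho>_def by (rule holomorphic_bump_mean_value[OF hol U s])
  finally have mean: "integral\<^sup>L lborel (\<lambda>z. \<rho> z *\<^sub>R \<zeta> z) = integral\<^sup>L lborel \<rho> *\<^sub>R \<zeta> x"
    using int_\<rho> by simp
  have "integral\<^sup>L lborel \<rho> * (cmod (\<zeta> x))\<^sup>2 \<le> integral\<^sup>L lborel (\<lambda>z. \<rho> z * (cmod (\<zeta> z))\<^sup>2)"
    by (rule weighted_mean_norm_sq_le[OF _ int_\<rho> int_\<rho>\<zeta> int_\<rho>\<zeta>2 mean]) (simp add: \<rho>_def bump_nonneg)
  moreover have "(cmod (\<zeta> x))\<^sup>2 * s ^ 4 \<le> (cmod (\<zeta> x))\<^sup>2 * integral\<^sup>L lborel \<rho>"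
    unfolding \<rho>_def by (intro mult_left_mono integral_bump_ge s(1)) simp
  ultimately show ?thesis
    by (simp add: \<rho>_def mult.commute)
qed

lemma holomorphic_norm_sq_le_nn_integral:
  fixes \<zeta> :: "complex \<Rightarrow> complex"
  assumes hol: "\<zeta> holomorphic_on U" and U: "open U" and s: "0 < s" "cball x s \<subseteq> U"
  shows "ennreal ((cmod (\<zeta> x))\<^sup>2 * s ^ 4)
    \<le> ennreal (2 * s\<^sup>2) * (\<integral>\<^sup>+z\<in>U. ennreal ((cmod (\<zeta> z))\<^sup>2) \<partial>lebesgue)"
proof -
  define \<rho> where "\<rho> z = bump (s\<^sup>2) ((cmod (z - x))\<^sup>2)" for z
  have cont_\<zeta>: "continuous_on U \<zeta>"
    by (rule holomorphic_on_imp_continuous_on[OF hol])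
  have int: "integrable lborel (\<lambda>z. \<rho> z * (cmod (\<zeta> z))\<^sup>2)"
    by (rule integrable_continuous_compact_support[OF compact_cball s(2) U])
       (use s(1) in \<open>auto intro!: continuous_intros continuous_on_bump_norm cont_\<zeta>
         simp: \<rho>_def bump_norm_outside_cball\<close>)
  have "ennreal ((cmod (\<zeta> x))\<^sup>2 * s ^ 4) \<le> ennreal (integral\<^sup>L lborel (\<lambda>z. \<rho> z * (cmod (\<zeta> z))\<^sup>2))"
    unfolding \<rho>_def by (intro ennreal_leI holomorphic_norm_sq_le_bump_integral[OF hol U s])
  also have "\<dots> = (\<integral>\<^sup>+z. ennreal (\<rho> z * (cmod (\<zeta> z))\<^sup>2) \<partial>lborel)"
    by (rule nn_integral_eq_integral[symmetric, OF int]) (simp add: \<rho>_def bump_nonneg)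
  also have "\<dots> \<le> (\<integral>\<^sup>+z. ennreal (2 * s\<^sup>2) * (ennreal ((cmod (\<zeta> z))\<^sup>2) * indicator U z) \<partial>lborel)"
  proof (rule nn_integral_mono)
    fix z
    show "ennreal (\<rho> z * (cmod (\<zeta> z))\<^sup>2) \<le> ennreal (2 * s\<^sup>2) * (ennreal ((cmod (\<zeta> z))\<^sup>2) * indicator U z)"
    proof (cases "z \<in> U")
      case True
      then show ?thesis
        by (simp add: \<rho>_def bump_le ennreal_mult[symmetric] mult_right_mono)
    next
      case False
      then have "z \<notin> cball x s" using s(2) by auto
      then show ?thesis using s(1) by (simp add: \<rho>_def bump_norm_outside_cball)
    qed
  qed
  also have "\<dots> = ennreal (2 * s\<^sup>2) * (\<integral>\<^sup>+z. ennreal ((cmod (\<zeta> z))\<^sup>2) * indicator U z \<partial>lborel)"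
  proof (rule nn_integral_cmult)
    have "(\<lambda>z. indicator U z *\<^sub>R (cmod (\<zeta> z))\<^sup>2) \<in> borel_measurable borel"
      using U by (intro borel_measurable_continuous_on_indicator) (auto intro!: continuous_intros cont_\<zeta>)
    then show "(\<lambda>z. ennreal ((cmod (\<zeta> z))\<^sup>2) * indicator U z) \<in> borel_measurable lborel"
      by (simp add: indicator_mult_ennreal mult.commute)
  qed
  also have "(\<integral>\<^sup>+z. ennreal ((cmod (\<zeta> z))\<^sup>2) * indicator U z \<partial>lborel)
      = (\<integral>\<^sup>+z\<in>U. ennreal ((cmod (\<zeta> z))\<^sup>2) \<partial>lebesgue)"
    by (simp add: nn_integral_completion)
  finally show ?thesis .
qed

lemma mult_power2_le_of_less:
  fixes a b r :: real
  assumes "0 < r" "\<And>s. 0 < s \<Longrightarrow> s < r \<Longrightarrow> a * s\<^sup>2 \<le> b"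
  shows "a * r\<^sup>2 \<le> b"
proof (rule tendsto_upperbound)
  show "((\<lambda>s. a * s\<^sup>2) \<longlongrightarrow> a * r\<^sup>2) (at_left r)"
    by (intro tendsto_intros)
  show "\<forall>\<^sub>F s in at_left r. a * s\<^sup>2 \<le> b"
    unfolding eventually_at_left_field using assms by (intro exI[of _ 0]) auto
qed (simp add: trivial_limit_at_left_real)

lemma hardy_weight_ge:
  assumes "cmod x < 1"
  shows "1 \<le> 4 * (1 - cmod x)\<^sup>2 * hardy_weight x"
proof -
  have pos: "0 < 1 - (cmod x)\<^sup>2" by (rule one_minus_norm_power2_pos[OF assms])
  have "1 - (cmod x)\<^sup>2 = (1 - cmod x) * (1 + cmod x)"
    by (simp add: power2_eq_square algebra_simps)
  also have "\<dots> \<le> (1 - cmod x) * 2"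
    using assms by (intro mult_left_mono) auto
  also have "\<dots> = 2 * (1 - cmod x)"
    by simp
  finally have "(1 - (cmod x)\<^sup>2)\<^sup>2 \<le> (2 * (1 - cmod x))\<^sup>2"
    using pos by (intro power_mono) auto
  also have "\<dots> = 4 * (1 - cmod x)\<^sup>2"
    by (subst power_mult_distrib) simp
  finally show ?thesis
    using pos by (simp add: hardy_weight_def)
qed

lemma le_hardy_weight_of_disk_bounds:
  fixes a m :: real
  assumes x: "cmod x < 1" and a: "0 \<le> a"
    and bound: "\<And>s. 0 < s \<Longrightarrow> s < 1 - cmod x \<Longrightarrow> a * s\<^sup>2 \<le> 2 * m"
  shows "a \<le> 8 * m * hardy_weight x"
proof -
  have le: "a * (1 - cmod x)\<^sup>2 \<le> 2 * m"
    by (rule mult_power2_le_of_less[OF _ bound]) (use x in simp_all)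
  have "a \<le> a * (4 * (1 - cmod x)\<^sup>2 * hardy_weight x)"
    using mult_left_mono[OF hardy_weight_ge[OF x] a] by simp
  also have "\<dots> = 4 * hardy_weight x * (a * (1 - cmod x)\<^sup>2)"
    by (simp only: mult_ac)
  also have "\<dots> \<le> 4 * hardy_weight x * (2 * m)"
    using le hardy_weight_nonneg by (intro mult_left_mono) auto
  finally show ?thesis
    by (simp add: mult_ac)
qed

lemma holomorphic_norm_sq_mult_le:
  fixes \<zeta> :: "complex \<Rightarrow> complex"
  assumes hol: "\<zeta> holomorphic_on U" and U: "open U" and s: "0 < s" "cball x s \<subseteq> U"
    and m: "(\<integral>\<^sup>+z\<in>U. ennreal ((cmod (\<zeta> z))\<^sup>2) \<partial>lebesgue) = ennreal m" "0 \<le> m"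
  shows "(cmod (\<zeta> x))\<^sup>2 * s\<^sup>2 \<le> 2 * m"
proof -
  have "ennreal ((cmod (\<zeta> x))\<^sup>2 * s ^ 4) \<le> ennreal (2 * s\<^sup>2) * ennreal m"
    using holomorphic_norm_sq_le_nn_integral[OF hol U s] m(1) by simp
  also have "\<dots> = ennreal (2 * s\<^sup>2 * m)"
    using m(2) by (simp add: ennreal_mult)
  finally have "ennreal ((cmod (\<zeta> x))\<^sup>2 * s ^ 4) \<le> ennreal (2 * s\<^sup>2 * m)" .
  moreover have "0 \<le> 2 * s\<^sup>2 * m"
    using m(2) by simp
  ultimately have "(cmod (\<zeta> x))\<^sup>2 * s ^ 4 \<le> 2 * s\<^sup>2 * m"
    by (simp only: ennreal_le_iff)
  then have "s\<^sup>2 * ((cmod (\<zeta> x))\<^sup>2 * s\<^sup>2) \<le> s\<^sup>2 * (2 * m)"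
    by (simp only: power4_eq_xxxx power2_eq_square mult_ac)
  then show ?thesis
    using s(1) by (simp only: mult_le_cancel_left_pos zero_less_power)
qed

lemma holomorphic_disk_norm_sq_le:
  fixes \<zeta> :: "complex \<Rightarrow> complex"
  assumes hol: "\<zeta> holomorphic_on ball 0 1" and x: "cmod x < 1"
  shows "ennreal ((cmod (\<zeta> x))\<^sup>2)
    \<le> 8 * (\<integral>\<^sup>+z\<in>ball 0 1. ennreal ((cmod (\<zeta> z))\<^sup>2) \<partial>lebesgue) * ennreal (hardy_weight x)"
proof (cases "\<integral>\<^sup>+z\<in>ball 0 1. ennreal ((cmod (\<zeta> z))\<^sup>2) \<partial>lebesgue")
  case (real m)
  have "cball x s \<subseteq> ball 0 1" if "s < 1 - cmod x" for s
    using that by (simp add: cball_subset_ball_iff)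
  then have "(cmod (\<zeta> x))\<^sup>2 \<le> 8 * m * hardy_weight x"
    by (intro le_hardy_weight_of_disk_bounds[OF x] holomorphic_norm_sq_mult_le[OF hol open_ball _ _ real(2,1)])
       simp_all
  then have "ennreal ((cmod (\<zeta> x))\<^sup>2) \<le> ennreal (8 * m * hardy_weight x)"
    by (rule ennreal_leI)
  then show ?thesis
    using real hardy_weight_nonneg[of x] by (simp add: ennreal_mult)
next
  case top
  moreover have "0 < hardy_weight x"
    using one_minus_norm_power2_pos[OF x] by (simp add: hardy_weight_def)
  ultimately show ?thesis
    by (simp add: ennreal_mult_top ennreal_top_mult)
qed

lemma nn_integral_holomorphic_disk_weighted_le:
  fixes \<zeta> :: "complex \<Rightarrow> complex" and f :: "complex \<Rightarrow> real"
  assumes hol: "\<zeta> holomorphic_on ball 0 1" and [measurable]: "f \<in> borel_measurable lebesgue"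
  shows "(\<integral>\<^sup>+x\<in>ball 0 1. ennreal ((f x)\<^sup>2 * (cmod (\<zeta> x))\<^sup>2) \<partial>lebesgue)
    \<le> 8 * (\<integral>\<^sup>+x\<in>ball 0 1. ennreal ((cmod (\<zeta> x))\<^sup>2) \<partial>lebesgue)
      * (\<integral>\<^sup>+x\<in>ball 0 1. ennreal (hardy_weight x * (f x)\<^sup>2) \<partial>lebesgue)"
proof -
  define M where "M = (\<integral>\<^sup>+x\<in>ball 0 1. ennreal ((cmod (\<zeta> x))\<^sup>2) \<partial>lebesgue)"
  have "(\<integral>\<^sup>+x\<in>ball 0 1. ennreal ((f x)\<^sup>2 * (cmod (\<zeta> x))\<^sup>2) \<partial>lebesgue)
      \<le> (\<integral>\<^sup>+x\<in>ball 0 1. 8 * M * ennreal (hardy_weight x * (f x)\<^sup>2) \<partial>lebesgue)"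
  proof (rule nn_integral_mono)
    fix x :: complex
    show "ennreal ((f x)\<^sup>2 * (cmod (\<zeta> x))\<^sup>2) * indicator (ball 0 1) x
        \<le> 8 * M * ennreal (hardy_weight x * (f x)\<^sup>2) * indicator (ball 0 1) x"
    proof (cases "x \<in> ball 0 1")
      case True
      then have "ennreal ((cmod (\<zeta> x))\<^sup>2) \<le> 8 * M * ennreal (hardy_weight x)"
        unfolding M_def by (intro holomorphic_disk_norm_sq_le[OF hol]) simp
      then have "ennreal ((f x)\<^sup>2) * ennreal ((cmod (\<zeta> x))\<^sup>2) \<le> ennreal ((f x)\<^sup>2) * (8 * M * ennreal (hardy_weight x))"
        by (rule mult_left_mono) simp
      then show ?thesis
        using True by (simp add: ennreal_mult hardy_weight_nonneg mult_ac)
    qed simp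
  qed
  also have "\<dots> = 8 * M * (\<integral>\<^sup>+x\<in>ball 0 1. ennreal (hardy_weight x * (f x)\<^sup>2) \<partial>lebesgue)"
    unfolding mult.assoc[of "8 * M"] by (rule nn_integral_cmult) measurable
  finally show ?thesis
    unfolding M_def .
qed

section \<open>Approximation in \<open>W\<^sup>1\<^sup>,\<^sup>2\<^sub>0\<close>\<close>

lemma power2_add_le_eps:
  fixes a b e :: real
  assumes "0 < e"
  shows "(a + b)\<^sup>2 \<le> (1 + e) * a\<^sup>2 + (1 + 1 / e) * b\<^sup>2"
proof -
  have "0 \<le> (sqrt e * a - b / sqrt e)\<^sup>2" by simp
  also have "\<dots> = e * a\<^sup>2 - 2 * a * b + b\<^sup>2 / e"
    using assms by (simp add: power2_diff power_divide power_mult_distrib field_simps power2_eq_square)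
  finally have "2 * a * b \<le> e * a\<^sup>2 + b\<^sup>2 / e" by simp
  then show ?thesis by (simp add: power2_sum field_simps)
qed

lemma nn_integral_power2_add_le:
  fixes u v :: "'a \<Rightarrow> 'b::{real_normed_vector,second_countable_topology}"
  assumes [measurable]: "u \<in> borel_measurable M" "v \<in> borel_measurable M" "w \<in> borel_measurable M"
    "S \<in> sets M"
    and "0 < e" "\<And>z. 0 \<le> w z"
  shows "(\<integral>\<^sup>+z\<in>S. ennreal (w z * (norm (u z + v z))\<^sup>2) \<partial>M)
    \<le> ennreal (1 + e) * (\<integral>\<^sup>+z\<in>S. ennreal (w z * (norm (u z))\<^sup>2) \<partial>M)
      + ennreal (1 + 1 / e) * (\<integral>\<^sup>+z\<in>S. ennreal (w z * (norm (v z))\<^sup>2) \<partial>M)"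
proof -
  have "(\<integral>\<^sup>+z\<in>S. ennreal (w z * (norm (u z + v z))\<^sup>2) \<partial>M)
      \<le> (\<integral>\<^sup>+z\<in>S. ennreal (1 + e) * ennreal (w z * (norm (u z))\<^sup>2)
          + ennreal (1 + 1 / e) * ennreal (w z * (norm (v z))\<^sup>2) \<partial>M)"
  proof (intro nn_integral_mono mult_right_mono)
    fix z
    have "(norm (u z + v z))\<^sup>2 \<le> (norm (u z) + norm (v z))\<^sup>2"
      by (intro power_mono norm_triangle_ineq) simp
    also have "\<dots> \<le> (1 + e) * (norm (u z))\<^sup>2 + (1 + 1 / e) * (norm (v z))\<^sup>2"
      by (rule power2_add_le_eps[OF \<open>0 < e\<close>])
    finally have "w z * (norm (u z + v z))\<^sup>2
        \<le> w z * ((1 + e) * (norm (u z))\<^sup>2 + (1 + 1 / e) * (norm (v z))\<^sup>2)"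
      using \<open>0 \<le> w z\<close> by (rule mult_left_mono)
    also have "\<dots> = (1 + e) * (w z * (norm (u z))\<^sup>2) + (1 + 1 / e) * (w z * (norm (v z))\<^sup>2)"
      by (simp add: algebra_simps)
    finally have "ennreal (w z * (norm (u z + v z))\<^sup>2)
        \<le> ennreal ((1 + e) * (w z * (norm (u z))\<^sup>2) + (1 + 1 / e) * (w z * (norm (v z))\<^sup>2))"
      by (rule ennreal_leI)
    also have "\<dots> = ennreal (1 + e) * ennreal (w z * (norm (u z))\<^sup>2)
        + ennreal (1 + 1 / e) * ennreal (w z * (norm (v z))\<^sup>2)"
      using \<open>0 < e\<close> \<open>0 \<le> w z\<close> by (simp add: ennreal_plus ennreal_mult del: ennreal_plus_if)
    finally show "ennreal (w z * (norm (u z + v z))\<^sup>2)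
        \<le> ennreal (1 + e) * ennreal (w z * (norm (u z))\<^sup>2)
          + ennreal (1 + 1 / e) * ennreal (w z * (norm (v z))\<^sup>2)" .
  qed simp
  also have "\<dots> = ennreal (1 + e) * (\<integral>\<^sup>+z\<in>S. ennreal (w z * (norm (u z))\<^sup>2) \<partial>M)
      + ennreal (1 + 1 / e) * (\<integral>\<^sup>+z\<in>S. ennreal (w z * (norm (v z))\<^sup>2) \<partial>M)"
    by (simp add: distrib_right mult.assoc nn_integral_add nn_integral_cmult)
  finally show ?thesis .
qed

lemma ennreal_le_of_forall_mult_le:
  fixes a b :: ennreal
  assumes "\<And>e. 0 < e \<Longrightarrow> a \<le> ennreal ((1 + e)\<^sup>2) * b"
  shows "a \<le> b"
proof (cases "b = \<infinity>")
  case False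
  show ?thesis
  proof (rule tendsto_lowerbound)
    have "((\<lambda>e::real. b * ennreal ((1 + e)\<^sup>2)) \<longlongrightarrow> b * ennreal ((1 + 0)\<^sup>2)) (at_right 0)"
      using False by (intro ennreal_tendsto_cmult tendsto_ennrealI tendsto_intros) (simp add: top.not_eq_extremum)
    then show "((\<lambda>e::real. ennreal ((1 + e)\<^sup>2) * b) \<longlongrightarrow> b) (at_right 0)"
      by (simp add: mult.commute)
    show "\<forall>\<^sub>F e in at_right 0. a \<le> ennreal ((1 + e)\<^sup>2) * b"
      unfolding eventually_at_right_field using assms by (intro exI[of _ 1]) auto
  qed (simp add: trivial_limit_at_right_real)
qed simp

text \<open>The weight is truncated at height n because the approximants converge to h only in
  unweighted L^2.\<close>

lemma truncated_hardy_le_test_fun: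
  assumes tf: "test_fun_disk \<phi> D" and e: "0 < e"
    and [measurable]: "h \<in> borel_measurable lebesgue" "g \<in> borel_measurable lebesgue"
  defines "c1 \<equiv> ennreal (1 + e)" and "c2 \<equiv> ennreal (1 + 1 / e)"
  shows "(\<integral>\<^sup>+z\<in>ball 0 1. ennreal (min (hardy_weight z) (real n) * (h z)\<^sup>2) \<partial>lebesgue)
    \<le> c1 * (c1 * (\<integral>\<^sup>+z\<in>ball 0 1. ennreal ((cmod (g z))\<^sup>2) \<partial>lebesgue)
          + c2 * (\<integral>\<^sup>+z\<in>ball 0 1. ennreal ((cmod (D z - g z))\<^sup>2) \<partial>lebesgue))
      + c2 * (of_nat n * (\<integral>\<^sup>+z\<in>ball 0 1. ennreal ((\<phi> z - h z)\<^sup>2) \<partial>lebesgue))"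
proof -
  note [measurable] = test_fun_disk_measurable[OF tf]
  have "(\<integral>\<^sup>+z\<in>ball 0 1. ennreal (min (hardy_weight z) (real n) * (h z)\<^sup>2) \<partial>lebesgue)
      \<le> c1 * (\<integral>\<^sup>+z\<in>ball 0 1. ennreal (min (hardy_weight z) (real n) * (\<phi> z)\<^sup>2) \<partial>lebesgue)
        + c2 * (\<integral>\<^sup>+z\<in>ball 0 1. ennreal (min (hardy_weight z) (real n) * (h z - \<phi> z)\<^sup>2) \<partial>lebesgue)"
    using nn_integral_power2_add_le[of \<phi> lebesgue "\<lambda>z. h z - \<phi> z"
        "\<lambda>z. min (hardy_weight z) (real n)" "ball 0 1" e] e
    by (simp add: c1_def c2_def hardy_weight_nonneg)
  also have "\<dots> \<le> c1 * (\<integral>\<^sup>+z\<in>ball 0 1. ennreal ((\<phi> z)\<^sup>2 * hardy_weight z) \<partial>lebesgue)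
      + c2 * (of_nat n * (\<integral>\<^sup>+z\<in>ball 0 1. ennreal ((\<phi> z - h z)\<^sup>2) \<partial>lebesgue))"
  proof (intro add_mono mult_left_mono)
    show "(\<integral>\<^sup>+z\<in>ball 0 1. ennreal (min (hardy_weight z) (real n) * (\<phi> z)\<^sup>2) \<partial>lebesgue)
        \<le> (\<integral>\<^sup>+z\<in>ball 0 1. ennreal ((\<phi> z)\<^sup>2 * hardy_weight z) \<partial>lebesgue)"
      by (intro nn_integral_mono mult_right_mono ennreal_leI)
         (auto simp: mult.commute[of "(\<phi> _)\<^sup>2"] intro: mult_right_mono)
    have "(\<integral>\<^sup>+z\<in>ball 0 1. ennreal (min (hardy_weight z) (real n) * (h z - \<phi> z)\<^sup>2) \<partial>lebesgue)
        \<le> (\<integral>\<^sup>+z\<in>ball 0 1. of_nat n * ennreal ((\<phi> z - h z)\<^sup>2) \<partial>lebesgue)"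
      by (intro nn_integral_mono mult_right_mono zero_le)
         (simp add: power2_commute[of "h _"] ennreal_of_nat_eq_real_of_nat ennreal_mult[symmetric]
           ennreal_leI mult_right_mono hardy_weight_nonneg)
    also have "\<dots> = of_nat n * (\<integral>\<^sup>+z\<in>ball 0 1. ennreal ((\<phi> z - h z)\<^sup>2) \<partial>lebesgue)"
      unfolding mult.assoc by (rule nn_integral_cmult) measurable
    finally show "(\<integral>\<^sup>+z\<in>ball 0 1. ennreal (min (hardy_weight z) (real n) * (h z - \<phi> z)\<^sup>2) \<partial>lebesgue)
        \<le> of_nat n * (\<integral>\<^sup>+z\<in>ball 0 1. ennreal ((\<phi> z - h z)\<^sup>2) \<partial>lebesgue)" .
  qed simp_all
  also have "(\<integral>\<^sup>+z\<in>ball 0 1. ennreal ((\<phi> z)\<^sup>2 * hardy_weight z) \<partial>lebesgue)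
      \<le> (\<integral>\<^sup>+z\<in>ball 0 1. ennreal ((cmod (D z))\<^sup>2) \<partial>lebesgue)"
    by (rule nn_integral_hardy_inequality_test_fun[OF tf])
  also have "\<dots> \<le> c1 * (\<integral>\<^sup>+z\<in>ball 0 1. ennreal ((cmod (g z))\<^sup>2) \<partial>lebesgue)
      + c2 * (\<integral>\<^sup>+z\<in>ball 0 1. ennreal ((cmod (D z - g z))\<^sup>2) \<partial>lebesgue)"
    using nn_integral_power2_add_le[of g lebesgue "\<lambda>z. D z - g z" "\<lambda>_. 1" "ball 0 1" e] e
    by (simp add: c1_def c2_def)
  finally show ?thesis
    by (simp add: mult_left_mono add_right_mono)
qed

lemma W12_0_disk_hardy_truncated:
  assumes "W12_0_disk h g" "0 < e"
  shows "(\<integral>\<^sup>+z\<in>ball 0 1. ennreal (min (hardy_weight z) (real n) * (h z)\<^sup>2) \<partial>lebesgue)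
    \<le> ennreal ((1 + e)\<^sup>2) * (\<integral>\<^sup>+z\<in>ball 0 1. ennreal ((cmod (g z))\<^sup>2) \<partial>lebesgue)"
proof -
  obtain \<phi> D where tf: "\<And>k. test_fun_disk (\<phi> k) (D k)"
    and E: "(\<lambda>k. \<integral>\<^sup>+z\<in>ball 0 1. ennreal ((\<phi> k z - h z)\<^sup>2) \<partial>lebesgue) \<longlonglongrightarrow> 0"
    and F: "(\<lambda>k. \<integral>\<^sup>+z\<in>ball 0 1. ennreal ((cmod (D k z - g z))\<^sup>2) \<partial>lebesgue) \<longlonglongrightarrow> 0"
    and m: "h \<in> borel_measurable lebesgue" "g \<in> borel_measurable lebesgue"
    using assms(1) unfolding W12_0_disk_def by auto
  define G where "G = (\<integral>\<^sup>+z\<in>ball 0 1. ennreal ((cmod (g z))\<^sup>2) \<partial>lebesgue)"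
  let ?c1 = "ennreal (1 + e)" and ?c2 = "ennreal (1 + 1 / e)"
  let ?bound = "\<lambda>E F. ?c1 * (?c1 * G + ?c2 * F) + ?c2 * (of_nat n * E)"
  have "((\<lambda>k. ?bound (\<integral>\<^sup>+z\<in>ball 0 1. ennreal ((\<phi> k z - h z)\<^sup>2) \<partial>lebesgue)
      (\<integral>\<^sup>+z\<in>ball 0 1. ennreal ((cmod (D k z - g z))\<^sup>2) \<partial>lebesgue)) \<longlonglongrightarrow> ?bound 0 0)"
    by (intro tendsto_add tendsto_const ennreal_tendsto_cmult E F)
       (auto simp: ennreal_of_nat_eq_real_of_nat)
  then have "(\<integral>\<^sup>+z\<in>ball 0 1. ennreal (min (hardy_weight z) (real n) * (h z)\<^sup>2) \<partial>lebesgue) \<le> ?bound 0 0"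
    by (rule LIMSEQ_le_const)
       (use truncated_hardy_le_test_fun[OF tf assms(2) m] in \<open>auto simp: G_def\<close>)
  also have "?bound 0 0 = ennreal ((1 + e)\<^sup>2) * G"
    using assms(2) by (simp add: power2_eq_square ennreal_mult mult.assoc)
  finally show ?thesis
    unfolding G_def .
qed

lemma W12_0_disk_hardy_inequality:
  assumes "W12_0_disk h g"
  shows "(\<integral>\<^sup>+z\<in>ball 0 1. ennreal (hardy_weight z * (h z)\<^sup>2) \<partial>lebesgue)
    \<le> (\<integral>\<^sup>+z\<in>ball 0 1. ennreal ((cmod (g z))\<^sup>2) \<partial>lebesgue)"
proof -
  have [measurable]: "h \<in> borel_measurable lebesgue"
    using assms unfolding W12_0_disk_def by blast
  define f where "f n z = ennreal (min (hardy_weight z) (real n) * (h z)\<^sup>2) * indicator (ball 0 1) z"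
    for n z
  have "incseq f"
    unfolding f_def incseq_def le_fun_def
    by (auto intro!: mult_right_mono ennreal_leI simp: min_def)
  have "(\<integral>\<^sup>+z\<in>ball 0 1. ennreal (hardy_weight z * (h z)\<^sup>2) \<partial>lebesgue) \<le> (\<integral>\<^sup>+z. (SUP n. f n z) \<partial>lebesgue)"
  proof (rule nn_integral_mono)
    fix z
    obtain n where "hardy_weight z \<le> real n"
      using real_arch_simple by blast
    then have "ennreal (hardy_weight z * (h z)\<^sup>2) * indicator (ball 0 1) z = f n z"
      by (simp add: f_def min_def)
    also have "\<dots> \<le> (SUP n. f n z)"
      by (rule SUP_upper) simp
    finally show "ennreal (hardy_weight z * (h z)\<^sup>2) * indicator (ball 0 1) z \<le> (SUP n. f n z)" .
  qed
  also have "\<dots> = (SUP n. integral\<^sup>N lebesgue (f n))"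
    by (rule nn_integral_monotone_convergence_SUP[OF \<open>incseq f\<close>]) (unfold f_def, measurable)
  also have "\<dots> \<le> (\<integral>\<^sup>+z\<in>ball 0 1. ennreal ((cmod (g z))\<^sup>2) \<partial>lebesgue)"
  proof (rule SUP_least)
    fix n
    show "integral\<^sup>N lebesgue (f n) \<le> (\<integral>\<^sup>+z\<in>ball 0 1. ennreal ((cmod (g z))\<^sup>2) \<partial>lebesgue)"
      unfolding f_def[abs_def]
      by (rule ennreal_le_of_forall_mult_le, rule W12_0_disk_hardy_truncated[OF assms])
  qed
  finally show ?thesis .
qed

theorem propositionC1:
  fixes \<zeta> :: "complex \<Rightarrow> complex" and h :: "complex \<Rightarrow> real" and g :: "complex \<Rightarrow> complex"
  assumes "\<zeta> holomorphic_on ball 0 1"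
    and "W12_0_disk h g"
  shows "(\<integral>\<^sup>+x\<in>ball 0 1. ennreal ((h x)\<^sup>2 * (cmod (\<zeta> x))\<^sup>2) \<partial>lebesgue)
         \<le> 8 * (\<integral>\<^sup>+x\<in>ball 0 1. ennreal ((cmod (g x))\<^sup>2) \<partial>lebesgue)
             * (\<integral>\<^sup>+x\<in>ball 0 1. ennreal ((cmod (\<zeta> x))\<^sup>2) \<partial>lebesgue)"
proof -
  have "h \<in> borel_measurable lebesgue"
    using assms(2) unfolding W12_0_disk_def by blast
  from nn_integral_holomorphic_disk_weighted_le[OF assms(1) this]
  have "(\<integral>\<^sup>+x\<in>ball 0 1. ennreal ((h x)\<^sup>2 * (cmod (\<zeta> x))\<^sup>2) \<partial>lebesgue)
      \<le> 8 * (\<integral>\<^sup>+x\<in>ball 0 1. ennreal ((cmod (\<zeta> x))\<^sup>2) \<partial>lebesgue)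
          * (\<integral>\<^sup>+x\<in>ball 0 1. ennreal (hardy_weight x * (h x)\<^sup>2) \<partial>lebesgue)" .
  also have "\<dots> \<le> 8 * (\<integral>\<^sup>+x\<in>ball 0 1. ennreal ((cmod (\<zeta> x))\<^sup>2) \<partial>lebesgue)
      * (\<integral>\<^sup>+x\<in>ball 0 1. ennreal ((cmod (g x))\<^sup>2) \<partial>lebesgue)"
    by (intro mult_left_mono W12_0_disk_hardy_inequality[OF assms(2)]) simp
  finally show ?thesis
    by (simp add: mult_ac)
qed

end
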